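(* Consider $m$ test points $X_{2n+1},\dots,X_{2n+m}$, each either an inlier (drawn from $P_X$) or an outlier, such that the inliers are jointly independent of each other and of $\mathcal{D}$; no continuity of the distribution of $\hat s(X)$ is assumed. Let $U_1,\dots,U_m$ be i.i.d. $\mathrm{Unif}([0,1])$, independent of all data, and define the randomized marginal conformal p-values \[p_j = \frac{|\{i \in \{n+1,\dots,2n\} : \hat{s}(X_i) < \hat{s}(X_{2n+j})\}| + \lceil (1 + |\{i \in \{n+1,\dots,2n\} : \hat{s}(X_i) = \hat{s}(X_{2n+j})\}|)U_j\rceil}{n+1},\quad j=1,\dots,m.\] Then $(p_1,\dots,p_m)$ is PRDS on the set of indices of inliers.
   Context: Setting: $P_X$ is a distribution on $\mathbb{R}^d$. Data $X_1,\dots,X_{2n}$ are i.i.d. from $P_X$; $\mathcal{D}^{\mathrm{train}}=\{X_1,\dots,X_n\}$ is treated as fixed (all probabilities conditional on it), $\mathcal{D}^{\mathrm{cal}}=\{X_{n+1},\dots,X_{2n}\}$, $\mathcal{D}=\mathcal{D}^{\mathrm{train}}\cup\mathcal{D}^{\mathrm{cal}}$. The score $\hat s:\mathbb{R}^d\to\mathbb{R}$ is a fixed function determined by $\mathcal{D}^{\mathrm{train}}$. For vectors $a,b\in\mathbb{R}^m$, $a\succeq b$ means coordinatewise $a_j\ge b_j$; $A\subset\mathbb{R}^m$ is increasing if $a\in A$, $b\succeq a$ imply $b\in A$. A random vector $Y=(Y_1,\dots,Y_m)$ is PRDS on $I_0\subset\{1,\dots,m\}$ if for every $i\in I_0$ and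 every increasing set $A$, $y\mapsto\mathbb{P}[Y\in A\mid Y_i=y]$ is non-decreasing. *)

theory Defs
  imports "HOL-Probability.Probability"
begin

text \<open>Sources of randomness: calibration point i (i < n), inlier test point j,
  auxiliary uniform U_j, and the block of all outlier test points.\<close>
datatype 'm src = Cal nat | Inl 'm | Unif 'm | Outl

definition src_sigma ::
  "'w measure \<Rightarrow> (nat \<Rightarrow> 'w \<Rightarrow> 'd::topological_space) \<Rightarrow> ('m \<Rightarrow> 'w \<Rightarrow> 'd)
    \<Rightarrow> ('m \<Rightarrow> 'w \<Rightarrow> real) \<Rightarrow> 'm set \<Rightarrow> 'm src \<Rightarrow> 'w set set" where
  "src_sigma M Xcal Xtest U inl k =
     (case k of
        Cal i \<Rightarrow> sets (vimage_algebra (space M) (Xcal i) borel)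
      | Inl j \<Rightarrow> sets (vimage_algebra (space M) (Xtest j) borel)
      | Unif j \<Rightarrow> sets (vimage_algebra (space M) (U j) borel)
      | Outl \<Rightarrow> sigma_sets (space M)
                  (\<Union>j\<in>-inl. {Xtest j -` B \<inter> space M | B. B \<in> sets borel}))"

text \<open>Randomized marginal conformal p-value; calibration points are indexed 0..n-1
  (standing for X_{n+1},...,X_{2n}).\<close>
definition conf_pval ::
  "('d \<Rightarrow> real) \<Rightarrow> nat \<Rightarrow> (nat \<Rightarrow> 'd) \<Rightarrow> 'd \<Rightarrow> real \<Rightarrow> real" where
  "conf_pval s n cal x u =
     (real (card {i\<in>{..<n}. s (cal i) < s x})
      + real_of_int \<lceil>(1 + real (card {i\<in>{..<n}. s (cal i) = s x})) * u\<rceil>) / (real n + 1)"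

definition increasing_set :: "('m \<Rightarrow> real) set \<Rightarrow> bool" where
  "increasing_set A \<longleftrightarrow> (\<forall>a\<in>A. \<forall>b. (\<forall>j. a j \<le> b j) \<longrightarrow> b \<in> A)"

definition cond_prob_eq ::
  "'w measure \<Rightarrow> ('m \<Rightarrow> 'w \<Rightarrow> real) \<Rightarrow> ('m \<Rightarrow> real) set \<Rightarrow> 'm \<Rightarrow> real \<Rightarrow> real" where
  "cond_prob_eq M Y A i y =
     measure M {\<omega>\<in>space M. (\<lambda>j. Y j \<omega>) \<in> A \<and> Y i \<omega> = y} / measure M {\<omega>\<in>space M. Y i \<omega> = y}"

definition PRDS_on :: "'w measure \<Rightarrow> ('m \<Rightarrow> 'w \<Rightarrow> real) \<Rightarrow> 'm set \<Rightarrow> bool" where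
  "PRDS_on M Y I0 \<longleftrightarrow>
     (\<forall>i\<in>I0. \<forall>A. increasing_set A \<longrightarrow>
        (\<forall>y y'. y \<le> y' \<and> measure M {\<omega>\<in>space M. Y i \<omega> = y} > 0
                \<and> measure M {\<omega>\<in>space M. Y i \<omega> = y'} > 0
           \<longrightarrow> cond_prob_eq M Y A i y \<le> cond_prob_eq M Y A i y'))"

end

theory Submission
  imports Defs
begin

text \<open>Fix an inlier \<open>i\<close> and pool its test score with the \<open>n\<close> calibration scores; these
  \<open>n + 1\<close> scores are i.i.d. With uniform tie-breaking \<open>p\<^sub>i = R / (n + 1)\<close>, where \<open>R\<close> is the
  randomized rank of the test score in the pool, and on the event \<open>R = r\<close> every other p-value is
  the conformal p-value computed against the pool with its rank-\<open>r\<close> element removed. This vector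
  \<open>p\<^sup>r\<close> is a symmetric function of the pool and coordinatewise non-decreasing in \<open>r\<close>.

  Integrating out \<open>U\<^sub>i\<close>, the probability of \<open>p \<in> A \<and> R = r\<close> is the integral of the event
  \<open>p\<^sup>r \<in> A\<close> weighted by the probability that the test point receives rank \<open>r\<close>. By
  independence the data form a product measure, and exchanging the test point with a calibration
  point is a measure-preserving permutation of coordinates; it moves this weight to any pooled
  point. The weights of the \<open>n + 1\<close> pooled points sum to one, so
  \<open>P(p \<in> A, R = r) = P(p\<^sup>r \<in> A) / (n + 1)\<close>, and the conditional probability of \<open>A\<close> given
  \<open>p\<^sub>i = r / (n + 1)\<close> is \<open>P(p\<^sup>r \<in> A)\<close>, which is non-decreasing in \<open>r\<close> when \<open>A\<close> is increasing.\<close>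

section \<open>Ranks with random tie-breaking\<close>

lemma card_filter_le_eq_less_plus_eq:
  fixes w :: "'a \<Rightarrow> 'b::linorder"
  assumes "finite K"
  shows "card {k\<in>K. w k \<le> t} = card {k\<in>K. w k < t} + card {k\<in>K. w k = t}"
proof -
  have "card {k\<in>K. w k \<le> t} = card ({k\<in>K. w k < t} \<union> {k\<in>K. w k = t})"
    by (rule arg_cong[of _ _ card]) auto
  also have "\<dots> = card {k\<in>K. w k < t} + card {k\<in>K. w k = t}"
    using assms by (intro card_Un_disjoint) auto
  finally show ?thesis .
qed

lemma card_filter_atMost_eq_lessThan:
  "card {k\<in>{..n::nat}. P k} = card {k\<in>{..<n}. P k} + (if P n then 1 else 0)"
proof -
  have "{k\<in>{..n}. P k} = {k\<in>{..<n}. P k} \<union> (if P n then {n} else {})"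
    by (auto simp: le_less)
  then show ?thesis
    by (simp add: card_Un_disjoint)
qed

lemma card_filter_permute:
  assumes "p permutes K" "\<And>k. k \<in> K \<Longrightarrow> Q k = P (p k)"
  shows "card {k\<in>K. Q k} = card {k\<in>K. P k}"
proof -
  have "{k\<in>K. Q k} = p -` {k\<in>K. P k}"
    using assms permutes_in_image[OF assms(1)] by auto
  also have "card \<dots> = card {k\<in>K. P k}"
    using permutes_inj[OF assms(1)] permutes_surj[OF assms(1)] by (intro card_vimage_inj) auto
  finally show ?thesis .
qed

lemma ceiling_mult_unit_bounds:
  fixes m :: nat and u :: real
  assumes "0 \<le> u" "u \<le> 1"
  shows "0 \<le> \<lceil>real m * u\<rceil>" "\<lceil>real m * u\<rceil> \<le> int m"
proof -
  have "0 \<le> real m * u" "real m * u \<le> real m" using assms by (auto simp: mult_left_le)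
  then show "0 \<le> \<lceil>real m * u\<rceil>" "\<lceil>real m * u\<rceil> \<le> int m" by (simp_all add: ceiling_le_iff)
qed

text \<open>Pooled scores \<open>w 0, ..., w n\<close>: the \<open>n\<close> calibration scores followed by the score of one
  inlier test point. Under uniform tie-breaking a value \<open>t\<close> occupies the ranks
  \<open>num_below n w t + 1, ..., num_below n w t + num_ties n w t\<close>; \<open>rank_in_ties n w r t\<close> says that
  \<open>r\<close> is one of them.\<close>

definition num_below :: "nat \<Rightarrow> (nat \<Rightarrow> real) \<Rightarrow> real \<Rightarrow> nat" where
  "num_below n w t = card {k\<in>{..n}. w k < t}"

definition num_ties :: "nat \<Rightarrow> (nat \<Rightarrow> real) \<Rightarrow> real \<Rightarrow> nat" where
  "num_ties n w t = card {k\<in>{..n}. w k = t}"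

definition rank_in_ties :: "nat \<Rightarrow> (nat \<Rightarrow> real) \<Rightarrow> int \<Rightarrow> real \<Rightarrow> bool" where
  "rank_in_ties n w r t \<longleftrightarrow>
     int (num_below n w t) < r \<and> r \<le> int (num_below n w t) + int (num_ties n w t)"

definition rand_rank :: "nat \<Rightarrow> (nat \<Rightarrow> real) \<Rightarrow> real \<Rightarrow> real \<Rightarrow> int" where
  "rand_rank n c t u =
     int (card {k\<in>{..<n}. c k < t}) + \<lceil>(1 + real (card {k\<in>{..<n}. c k = t})) * u\<rceil>"

text \<open>Numerator of the conformal p-value of \<open>t\<close> computed against the pooled scores with the
  score of rank \<open>r\<close> removed.\<close>
definition rank_drop :: "nat \<Rightarrow> (nat \<Rightarrow> real) \<Rightarrow> int \<Rightarrow> real \<Rightarrow> real \<Rightarrow> int" where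
  "rank_drop n w r t u =
     int (num_below n w t) - (if r \<le> int (num_below n w t) then 1 else 0)
     + \<lceil>(real (num_ties n w t) + 1 - (if rank_in_ties n w r t then 1 else 0)) * u\<rceil>"

text \<open>Probability that the pooled score \<open>w k\<close> receives rank \<open>r\<close>.\<close>
definition rank_prob :: "nat \<Rightarrow> (nat \<Rightarrow> real) \<Rightarrow> int \<Rightarrow> nat \<Rightarrow> real" where
  "rank_prob n w r k = (if rank_in_ties n w r (w k) then 1 / real (num_ties n w (w k)) else 0)"

lemma conf_pval_eq_rand_rank:
  "conf_pval s n cal x u = real_of_int (rand_rank n (\<lambda>k. s (cal k)) (s x) u) / (real n + 1)"
  by (simp add: conf_pval_def rand_rank_def)

lemma rand_rank_cong:
  assumes "\<And>k. k < n \<Longrightarrow> c k = c' k"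
  shows "rand_rank n c t u = rand_rank n c' t u"
proof -
  have "{k\<in>{..<n}. c k < t} = {k\<in>{..<n}. c' k < t}" "{k\<in>{..<n}. c k = t} = {k\<in>{..<n}. c' k = t}"
    using assms by auto
  then show ?thesis unfolding rand_rank_def by simp
qed

lemma num_below_plus_num_ties: "num_below n w t + num_ties n w t = card {k\<in>{..n}. w k \<le> t}"
  unfolding num_below_def num_ties_def by (rule card_filter_le_eq_less_plus_eq[symmetric]) simp

lemma num_below_plus_num_ties_le: "num_below n w t + num_ties n w t \<le> n + 1"
proof -
  have "card {k\<in>{..n}. w k \<le> t} \<le> card {..n}" by (intro card_mono) auto
  then show ?thesis by (simp add: num_below_plus_num_ties)
qed

lemma num_below_mono: "t \<le> t' \<Longrightarrow> num_below n w t \<le> num_below n w t'"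
  unfolding num_below_def by (intro card_mono) auto

lemma num_below_plus_num_ties_le_num_below:
  assumes "t < t'"
  shows "num_below n w t + num_ties n w t \<le> num_below n w t'"
  unfolding num_below_plus_num_ties unfolding num_below_def
  using assms by (intro card_mono) auto

lemma rank_in_ties_unique:
  assumes "rank_in_ties n w r t" "rank_in_ties n w r t'"
  shows "t = t'"
proof (rule ccontr)
  assume "t \<noteq> t'"
  then consider "t < t'" | "t' < t" by linarith
  then show False
    using assms num_below_plus_num_ties_le_num_below[of t t' n w]
      num_below_plus_num_ties_le_num_below[of t' t n w]
    unfolding rank_in_ties_def by cases linarith+
qed

lemma rank_in_ties_exists:
  assumes "1 \<le> r" "r \<le> int n + 1"
  shows "\<exists>k\<le>n. rank_in_ties n w r (w k)"
proof -
  define V where "V = {t \<in> w ` {..n}. r \<le> int (card {j\<in>{..n}. w j \<le> t})}"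
  have "finite V" unfolding V_def by auto
  have "Max (w ` {..n}) \<in> V"
  proof -
    have "{j\<in>{..n}. w j \<le> Max (w ` {..n})} = {..n}" by auto
    then show ?thesis using assms unfolding V_def by auto
  qed
  then have "V \<noteq> {}" by auto
  define v where "v = Min V"
  have "v \<in> V" unfolding v_def using \<open>finite V\<close> \<open>V \<noteq> {}\<close> by (rule Min_in)
  then obtain k where k: "k \<le> n" "w k = v" and r_le: "r \<le> int (num_below n w v + num_ties n w v)"
    unfolding V_def num_below_plus_num_ties by auto
  have "int (num_below n w v) < r"
  proof (cases "{j\<in>{..n}. w j < v} = {}")
    case True
    show ?thesis unfolding num_below_def True using assms by simp
  next
    case False
    \<comment> \<open>the largest score below v is not in V, by minimality of v\<close>
    define v' where "v' = Max (w ` {j\<in>{..n}. w j < v})"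
    have "v' \<in> w ` {j\<in>{..n}. w j < v}" unfolding v'_def using False by (intro Max_in) auto
    then have "v' < v" "v' \<in> w ` {..n}" by auto
    then have "v' \<notin> V" using \<open>finite V\<close> unfolding v_def by (auto dest: Min_le)
    moreover have "{j\<in>{..n}. w j \<le> v'} = {j\<in>{..n}. w j < v}"
      using \<open>v' < v\<close> unfolding v'_def by (auto intro!: Max_ge)
    ultimately show ?thesis using \<open>v' \<in> w ` {..n}\<close> unfolding V_def num_below_def by auto
  qed
  then show ?thesis using k r_le unfolding rank_in_ties_def by auto
qed

lemma rank_prob_sum:
  assumes "1 \<le> r" "r \<le> int n + 1"
  shows "(\<Sum>k\<le>n. rank_prob n w r k) = 1"
proof -
  obtain k0 where "k0 \<le> n" and k0: "rank_in_ties n w r (w k0)"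
    using rank_in_ties_exists[OF assms] by blast
  define K where "K = {k\<in>{..n}. w k = w k0}"
  define c where "c = 1 / real (num_ties n w (w k0))"
  have "rank_prob n w r k = (if k \<in> K then c else 0)" if "k \<le> n" for k
  proof (cases "w k = w k0")
    case True
    then show ?thesis using k0 that by (simp add: rank_prob_def K_def c_def)
  next
    case False
    then show ?thesis using rank_in_ties_unique[OF _ k0, of "w k"] unfolding rank_prob_def K_def by auto
  qed
  then have "(\<Sum>k\<le>n. rank_prob n w r k) = (\<Sum>k\<le>n. if k \<in> K then c else 0)"
    by (intro sum.cong) auto
  also have "\<dots> = (\<Sum>k\<in>{..n} \<inter> K. c)"
    by (rule sum.inter_restrict[symmetric]) simp
  also have "{..n} \<inter> K = K" unfolding K_def by auto
  also have "(\<Sum>k\<in>K. c) = 1"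
  proof -
    have "card K = num_ties n w (w k0)" unfolding K_def num_ties_def ..
    moreover have "k0 \<in> K" "finite K" using \<open>k0 \<le> n\<close> unfolding K_def by auto
    ultimately have "num_ties n w (w k0) > 0" by (metis card_gt_0_iff empty_iff)
    then show ?thesis using \<open>card K = _\<close> by (simp add: c_def)
  qed
  finally show ?thesis .
qed

lemma rank_prob_eq_0:
  assumes "\<not> (1 \<le> r \<and> r \<le> int n + 1)"
  shows "rank_prob n w r k = 0"
  using assms num_below_plus_num_ties_le[of n w "w k"]
  unfolding rank_prob_def rank_in_ties_def by auto

lemma rank_prob_nonneg: "0 \<le> rank_prob n w r k"
  unfolding rank_prob_def by auto

lemma rand_rank_eq_rank_drop:
  assumes r: "rank_in_ties n w r (w n)"
  shows "rand_rank n w t u = rank_drop n w r t u"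
proof -
  have below: "num_below n w t = card {k\<in>{..<n}. w k < t} + (if w n < t then 1 else 0)"
    unfolding num_below_def by (rule card_filter_atMost_eq_lessThan)
  have ties: "num_ties n w t = card {k\<in>{..<n}. w k = t} + (if w n = t then 1 else 0)"
    unfolding num_ties_def by (rule card_filter_atMost_eq_lessThan)
  have "r \<le> int (num_below n w t) \<longleftrightarrow> w n < t"
  proof
    assume "r \<le> int (num_below n w t)"
    then have "\<not> num_below n w t \<le> num_below n w (w n)" using r unfolding rank_in_ties_def by linarith
    then show "w n < t" using num_below_mono[of t "w n" n w] by linarith
  next
    assume "w n < t"
    then show "r \<le> int (num_below n w t)"
      using r num_below_plus_num_ties_le_num_below[of "w n" t n w] unfolding rank_in_ties_def by linarith
  qed
  moreover have "rank_in_ties n w r t \<longleftrightarrow> w n = t"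
    using r rank_in_ties_unique[of n w r t "w n"] by auto
  ultimately show ?thesis
    unfolding rand_rank_def rank_drop_def below ties by (auto simp: algebra_simps)
qed

lemma rank_drop_mono:
  assumes "r \<le> r'" "0 \<le> u" "u \<le> 1"
  shows "rank_drop n w r t u \<le> rank_drop n w r' t u"
proof -
  define E where "E = real (num_ties n w t)"
  have "(E + 1) * u = E * u + u" by (simp add: algebra_simps)
  then have "(E + 1) * u \<le> 1 + real_of_int \<lceil>E * u\<rceil>"
    using assms le_of_int_ceiling[of "E * u"] by linarith
  then have "\<lceil>(E + 1) * u\<rceil> \<le> 1 + \<lceil>E * u\<rceil>"
    by (simp add: ceiling_le_iff)
  moreover have "\<lceil>E * u\<rceil> \<le> \<lceil>(E + 1) * u\<rceil>"
    using assms by (intro ceiling_mono) (simp add: algebra_simps)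
  ultimately show ?thesis
    using assms(1) unfolding rank_drop_def rank_in_ties_def E_def[symmetric] by auto
qed

lemma rand_rank_bounds:
  assumes "0 \<le> u" "u \<le> 1"
  shows "rand_rank n c t u \<in> {0..int n + 1}"
proof -
  define L where "L = card {k\<in>{..<n}. c k < t}"
  define E where "E = card {k\<in>{..<n}. c k = t}"
  have "L + E = card {k\<in>{..<n}. c k \<le> t}"
    unfolding L_def E_def by (rule card_filter_le_eq_less_plus_eq[symmetric]) simp
  also have "\<dots> \<le> card {..<n}" by (rule card_mono) auto
  finally have "L + E \<le> n" by simp
  moreover have "rand_rank n c t u = int L + \<lceil>real (E + 1) * u\<rceil>"
    unfolding rand_rank_def L_def E_def by (simp add: add.commute)
  ultimately show ?thesis
    using ceiling_mult_unit_bounds[OF assms, of "E + 1"] by simp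
qed

lemma rank_drop_bounds:
  assumes "0 \<le> u" "u \<le> 1"
  shows "rank_drop n w r t u \<in> {-1..int n + 2}"
proof -
  define m where "m = num_ties n w t + 1 - (if rank_in_ties n w r t then 1 else 0)"
  have "rank_drop n w r t u
      = int (num_below n w t) - (if r \<le> int (num_below n w t) then 1 else 0) + \<lceil>real m * u\<rceil>"
    unfolding rank_drop_def m_def by (simp add: of_nat_diff add.commute)
  moreover have "m \<le> num_ties n w t + 1" unfolding m_def by simp
  ultimately show ?thesis
    using ceiling_mult_unit_bounds[OF assms, of m] num_below_plus_num_ties_le[of n w t]
    by (auto simp del: zero_le_ceiling)
qed

lemma num_below_permute:
  "p permutes {..n} \<Longrightarrow> (\<And>k. k \<le> n \<Longrightarrow> w' k = w (p k)) \<Longrightarrow> num_below n w' t = num_below n w t"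
  unfolding num_below_def by (rule card_filter_permute) auto

lemma num_ties_permute:
  "p permutes {..n} \<Longrightarrow> (\<And>k. k \<le> n \<Longrightarrow> w' k = w (p k)) \<Longrightarrow> num_ties n w' t = num_ties n w t"
  unfolding num_ties_def by (rule card_filter_permute) auto

lemma rank_drop_permute:
  "p permutes {..n} \<Longrightarrow> (\<And>k. k \<le> n \<Longrightarrow> w' k = w (p k)) \<Longrightarrow> rank_drop n w' r t u = rank_drop n w r t u"
  by (simp add: rank_drop_def rank_in_ties_def num_below_permute num_ties_permute)

lemma rank_prob_permute:
  "p permutes {..n} \<Longrightarrow> (\<And>k. k \<le> n \<Longrightarrow> w' k = w (p k)) \<Longrightarrow> k \<le> n
    \<Longrightarrow> rank_prob n w' r k = rank_prob n w r (p k)"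
  by (simp add: rank_prob_def rank_in_ties_def num_below_permute num_ties_permute)

section \<open>Uniform tie-breaking\<close>

lemma clamp_real_eq_max_min:
  fixes a b x :: real
  assumes "a \<le> b"
  shows "clamp a b x = max a (min b x)"
  using assms unfolding clamp_def Basis_real_def by auto

lemma borel_measurable_clamp01[measurable]: "clamp (0::real) 1 \<in> borel_measurable borel"
proof -
  have "clamp (0::real) 1 = (\<lambda>x. max 0 (min 1 x))" by (simp add: fun_eq_iff clamp_real_eq_max_min)
  then show ?thesis by simp
qed

lemma clamp01_bounds: "0 \<le> clamp 0 1 (u::real)" "clamp 0 1 (u::real) \<le> 1"
  using clamp_in_interval[of 0 1 u] by simp_all

lemma emeasure_ceiling_uniform:
  fixes m :: nat and c :: int
  assumes "0 < m"
  shows "emeasure (uniform_measure lborel {0..1::real}) {u. \<lceil>real m * clamp 0 1 u\<rceil> = c}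
       = ennreal (if 1 \<le> c \<and> c \<le> int m then 1 / real m else 0)"
proof -
  define S where "S = {u. \<lceil>real m * clamp 0 1 u\<rceil> = c}"
  have "S \<in> sets borel" unfolding S_def by measurable
  have S01: "S \<inter> {0..1} = {u\<in>{0..1}. real_of_int c - 1 < real m * u \<and> real m * u \<le> real_of_int c}"
    unfolding S_def by (auto simp: ceiling_eq_iff)
  have "emeasure lborel (S \<inter> {0..1}) = ennreal (if 1 \<le> c \<and> c \<le> int m then 1 / real m else 0)"
  proof (cases "1 \<le> c \<and> c \<le> int m")
    case True
    have pos: "0 < real m" using assms by simp
    have "0 \<le> u \<and> u \<le> 1" if "real_of_int c - 1 < real m * u" "real m * u \<le> real_of_int c" for u
    proof -
      have "0 < real m * u" "real m * u \<le> real m * 1" using that True by linarith+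
      then show ?thesis using pos by (simp add: zero_less_mult_iff mult_le_cancel_left_pos)
    qed
    then have "S \<inter> {0..1} = {u. real_of_int c - 1 < real m * u \<and> real m * u \<le> real_of_int c}"
      unfolding S01 by auto
    also have "\<dots> = {(real_of_int c - 1) / real m <.. real_of_int c / real m}"
      using pos by (auto simp: field_simps)
    finally show ?thesis
      using True pos by (simp add: diff_divide_distrib)
  next
    case False
    have "S \<inter> {0..1} \<subseteq> {0}"
    proof
      fix u assume u: "u \<in> S \<inter> {0..1}"
      then have c: "\<lceil>real m * u\<rceil> = c" unfolding S_def by auto
      then have "c = 0" using ceiling_mult_unit_bounds[of u m] u False by auto
      then have "real m * u \<le> 0" using c by (simp add: ceiling_le_zero[symmetric])
      then show "u \<in> {0}" using u assms by (simp add: mult_le_0_iff)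
    qed
    then have "emeasure lborel (S \<inter> {0..1}) \<le> emeasure lborel {0::real..0}"
      by (intro emeasure_mono) auto
    then show ?thesis using False by simp
  qed
  then show ?thesis
    using \<open>S \<in> sets borel\<close> unfolding S_def[symmetric] by (simp add: emeasure_uniform_measure Int_commute divide_ennreal_def)
qed

lemma emeasure_rand_rank_uniform:
  "emeasure (uniform_measure lborel {0..1::real}) {u. rand_rank n w (w n) (clamp 0 1 u) = r}
     = ennreal (rank_prob n w r n)"
proof -
  define L where "L = num_below n w (w n)"
  define T where "T = num_ties n w (w n)"
  have L: "L = card {k\<in>{..<n}. w k < w n}" "T = card {k\<in>{..<n}. w k = w n} + 1"
    unfolding L_def T_def num_below_def num_ties_def
    by (subst card_filter_atMost_eq_lessThan, simp)+
  have "{u. rand_rank n w (w n) (clamp 0 1 u) = r} = {u. \<lceil>real T * clamp 0 1 u\<rceil> = r - int L}"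
    unfolding rand_rank_def L by (auto simp: add.commute)
  moreover have "rank_prob n w r n = (if 1 \<le> r - int L \<and> r - int L \<le> int T then 1 / real T else 0)"
    unfolding rank_prob_def rank_in_ties_def L_def[symmetric] T_def[symmetric] by auto
  ultimately show ?thesis
    using emeasure_ceiling_uniform[of T "r - int L"] L by simp
qed

lemma borel_measurable_card_Collect:
  assumes "finite K" "\<And>k. k \<in> K \<Longrightarrow> Measurable.pred N (\<lambda>x. P x k)"
  shows "(\<lambda>x. real (card {k\<in>K. P x k})) \<in> borel_measurable N"
proof -
  have "real (card {k\<in>K. P x k}) = (\<Sum>k\<in>K. if P x k then 1 else 0)" for x
    using assms(1) by (simp add: sum.If_cases Int_def)
  moreover have "(\<lambda>x. \<Sum>k\<in>K. if P x k then 1 else 0 :: real) \<in> borel_measurable N"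
    using assms(2) by (intro borel_measurable_sum) measurable
  ultimately show ?thesis by simp
qed

lemma borel_measurable_num_below_ties:
  assumes [measurable]: "\<And>k. (\<lambda>x. w x k) \<in> borel_measurable N" "t \<in> borel_measurable N"
  shows "(\<lambda>x. real (num_below n (w x) (t x))) \<in> borel_measurable N"
    and "(\<lambda>x. real (num_ties n (w x) (t x))) \<in> borel_measurable N"
  unfolding num_below_def num_ties_def by (intro borel_measurable_card_Collect; measurable)+

lemma rank_in_ties_real:
  "rank_in_ties n w r t \<longleftrightarrow> real (num_below n w t) < real_of_int r
     \<and> real_of_int r \<le> real (num_below n w t) + real (num_ties n w t)"
  unfolding rank_in_ties_def by linarith

lemma borel_measurable_rand_rank:
  assumes "\<And>k. k < n \<Longrightarrow> (\<lambda>x. c x k) \<in> borel_measurable N"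
    and [measurable]: "t \<in> borel_measurable N" "u \<in> borel_measurable N"
  shows "(\<lambda>x. real_of_int (rand_rank n (c x) (t x) (u x))) \<in> borel_measurable N"
proof -
  have [measurable]: "Measurable.pred N (\<lambda>x. c x k < t x)" "Measurable.pred N (\<lambda>x. c x k = t x)"
    if "k \<in> {..<n}" for k
  proof -
    have [measurable]: "(\<lambda>x. c x k) \<in> borel_measurable N" using assms(1) that by simp
    show "Measurable.pred N (\<lambda>x. c x k < t x)" "Measurable.pred N (\<lambda>x. c x k = t x)"
      by measurable
  qed
  have [measurable]: "(\<lambda>x. real (card {k\<in>{..<n}. c x k < t x})) \<in> borel_measurable N"
    "(\<lambda>x. real (card {k\<in>{..<n}. c x k = t x})) \<in> borel_measurable N"
    by (intro borel_measurable_card_Collect; simp)+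
  show ?thesis unfolding rand_rank_def by measurable
qed

lemma borel_measurable_rank_drop:
  assumes "\<And>k. (\<lambda>x. w x k) \<in> borel_measurable N" "t \<in> borel_measurable N" and [measurable]: "u \<in> borel_measurable N"
  shows "(\<lambda>x. real_of_int (rank_drop n (w x) r (t x) (u x))) \<in> borel_measurable N"
proof -
  note [measurable] = borel_measurable_num_below_ties[OF assms(1,2)]
  have eq: "real_of_int (rank_drop n (w x) r (t x) (u x))
    = real (num_below n (w x) (t x)) - (if real_of_int r \<le> real (num_below n (w x) (t x)) then 1 else 0)
      + real_of_int \<lceil>(real (num_ties n (w x) (t x)) + 1
          - (if rank_in_ties n (w x) r (t x) then 1 else 0)) * u x\<rceil>" for x
  proof -
    have "real_of_int r \<le> real (num_below n (w x) (t x)) \<longleftrightarrow> r \<le> int (num_below n (w x) (t x))"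
      by linarith
    then show ?thesis unfolding rank_drop_def by simp
  qed
  have [measurable]: "Measurable.pred N (\<lambda>x. rank_in_ties n (w x) r (t x))"
    unfolding rank_in_ties_real by measurable
  show ?thesis unfolding eq by measurable
qed

lemma borel_measurable_rank_prob:
  assumes "\<And>k. (\<lambda>x. w x k) \<in> borel_measurable N"
  shows "(\<lambda>x. rank_prob n (w x) r k) \<in> borel_measurable N"
proof -
  note [measurable] = borel_measurable_num_below_ties[OF assms assms]
  show ?thesis unfolding rank_prob_def rank_in_ties_real by measurable
qed

lemma sets_Collect_finite_valued:
  fixes f :: "'a \<Rightarrow> 'm::finite \<Rightarrow> real"
  assumes "finite V" "\<And>x j. x \<in> space N \<Longrightarrow> f x j \<in> V" "\<And>j. (\<lambda>x. f x j) \<in> borel_measurable N"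
  shows "{x\<in>space N. f x \<in> A} \<in> sets N"
proof -
  define G where "G = PiE UNIV (\<lambda>_::'m. V)"
  have "finite G" unfolding G_def using assms(1) by (simp add: finite_PiE)
  have "{x\<in>space N. f x \<in> A} = (\<Union>g\<in>G \<inter> A. \<Inter>j. {x\<in>space N. f x j = g j})"
  proof (intro equalityI subsetI)
    fix x assume "x \<in> {x\<in>space N. f x \<in> A}"
    then show "x \<in> (\<Union>g\<in>G \<inter> A. \<Inter>j. {x\<in>space N. f x j = g j})"
      using assms(2) unfolding G_def by blast
  qed (auto simp: fun_eq_iff[symmetric])
  moreover have "{x\<in>space N. f x j = c} \<in> sets N" for j c
    using assms(3)[of j] by measurable
  ultimately show ?thesis
    using \<open>finite G\<close> by (auto intro!: sets.finite_UN sets.finite_INT)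
qed

section \<open>The product model\<close>

text \<open>A point \<open>x\<close> of the product space assigns a vector \<open>'m \<Rightarrow> real\<close> to every source. The scalar
  sources (calibration points, inlier test points, tie-breaking variables) are stored as constant
  vectors and read at the index \<open>undefined\<close>; \<open>Outl\<close> holds the scores of all outliers at once.\<close>

definition borel_vec :: "('m \<Rightarrow> real) measure" where
  "borel_vec = PiM UNIV (\<lambda>_. borel)"

definition sources :: "nat \<Rightarrow> 'm set \<Rightarrow> 'm src set" where
  "sources n inl = Cal ` {..<n} \<union> Inl ` inl \<union> range Unif \<union> {Outl}"

definition pooled_src :: "nat \<Rightarrow> 'm \<Rightarrow> nat \<Rightarrow> 'm src" where
  "pooled_src n i k = (if k < n then Cal k else Inl i)"

definition pooled :: "nat \<Rightarrow> 'm \<Rightarrow> ('m src \<Rightarrow> 'm \<Rightarrow> real) \<Rightarrow> nat \<Rightarrow> real" where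
  "pooled n i x k = x (pooled_src n i k) undefined"

definition test_score :: "'m set \<Rightarrow> ('m src \<Rightarrow> 'm \<Rightarrow> real) \<Rightarrow> 'm \<Rightarrow> real" where
  "test_score inl x j = (if j \<in> inl then x (Inl j) undefined else x Outl j)"

text \<open>Coordinates range over all reals, so the tie-breaking variable is clamped into \<open>[0, 1]\<close>;
  this changes nothing almost surely.\<close>

definition tiebreak :: "('m src \<Rightarrow> 'm \<Rightarrow> real) \<Rightarrow> 'm \<Rightarrow> real" where
  "tiebreak x j = clamp 0 1 (x (Unif j) undefined)"

definition pvals :: "nat \<Rightarrow> 'm set \<Rightarrow> ('m src \<Rightarrow> 'm \<Rightarrow> real) \<Rightarrow> 'm \<Rightarrow> real" where
  "pvals n inl x j =
     real_of_int (rand_rank n (\<lambda>k. x (Cal k) undefined) (test_score inl x j) (tiebreak x j)) / (real n + 1)"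

text \<open>The p-values on the event that inlier \<open>i\<close> has rank \<open>r\<close> in its pool.\<close>

definition pvals_given_rank :: "nat \<Rightarrow> 'm set \<Rightarrow> 'm \<Rightarrow> int \<Rightarrow> ('m src \<Rightarrow> 'm \<Rightarrow> real) \<Rightarrow> 'm \<Rightarrow> real" where
  "pvals_given_rank n inl i r x j =
     real_of_int (if j = i then r else rank_drop n (pooled n i x) r (test_score inl x j) (tiebreak x j))
     / (real n + 1)"

lemma pvals_eq_pooled:
  "pvals n inl x j = real_of_int (rand_rank n (pooled n i x) (test_score inl x j) (tiebreak x j)) / (real n + 1)"
  unfolding pvals_def by (subst rand_rank_cong[of n _ "pooled n i x"]) (simp_all add: pooled_def pooled_src_def)

lemma tiebreak_bounds: "0 \<le> tiebreak x j" "tiebreak x j \<le> 1"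
  unfolding tiebreak_def by (rule clamp01_bounds)+

lemma pvals_grid: "pvals n inl x j \<in> (\<lambda>z. real_of_int z / (real n + 1)) ` {-1..int n + 2}"
proof -
  have "rand_rank n (\<lambda>k. x (Cal k) undefined) (test_score inl x j) (tiebreak x j) \<in> {0..int n + 1}"
    by (rule rand_rank_bounds[OF tiebreak_bounds])
  then show ?thesis unfolding pvals_def by (intro image_eqI[OF refl]) auto
qed

lemma pvals_given_rank_grid:
  assumes "1 \<le> r" "r \<le> int n + 1"
  shows "pvals_given_rank n inl i r x j \<in> (\<lambda>z. real_of_int z / (real n + 1)) ` {-1..int n + 2}"
proof -
  have "rank_drop n (pooled n i x) r (test_score inl x j) (tiebreak x j) \<in> {-1..int n + 2}"
    by (rule rank_drop_bounds[OF tiebreak_bounds])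
  then show ?thesis unfolding pvals_given_rank_def using assms by (intro image_eqI[OF refl]) auto
qed

lemma pvals_given_rank_mono:
  assumes "r \<le> r'" "increasing_set A" "pvals_given_rank n inl i r x \<in> A"
  shows "pvals_given_rank n inl i r' x \<in> A"
proof -
  have "pvals_given_rank n inl i r x j \<le> pvals_given_rank n inl i r' x j" for j
    unfolding pvals_given_rank_def using assms(1)
    by (auto intro!: divide_right_mono simp: rank_drop_mono[OF assms(1) tiebreak_bounds])
  then show ?thesis using assms(2,3) unfolding increasing_set_def by blast
qed

locale source_product = product_prob_space \<nu> "sources n inl"
  for \<nu> :: "'m::finite src \<Rightarrow> ('m \<Rightarrow> real) measure" and n :: nat and inl :: "'m set" +
  assumes sets_\<nu>: "\<And>m. sets (\<nu> m) = sets borel_vec"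
begin

lemma space_PiM_\<nu>: "space (PiM J \<nu>) = PiE J (\<lambda>_. UNIV)"
  using sets_eq_imp_space_eq[OF sets_\<nu>] by (simp add: space_PiM borel_vec_def)

lemma measurable_coordinate:
  assumes "m \<in> J"
  shows "(\<lambda>x. x m j) \<in> borel_measurable (PiM J \<nu>)"
proof -
  have "(\<lambda>x. x m) \<in> measurable (PiM J \<nu>) (\<nu> m)"
    by (rule measurable_component_singleton[OF assms])
  also have "measurable (PiM J \<nu>) (\<nu> m) = measurable (PiM J \<nu>) borel_vec"
    by (rule measurable_cong_sets[OF refl sets_\<nu>])
  finally have "(\<lambda>x. x m) \<in> measurable (PiM J \<nu>) borel_vec" .
  moreover have "(\<lambda>f. f j) \<in> borel_measurable (borel_vec :: ('m \<Rightarrow> real) measure)"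
    unfolding borel_vec_def by (rule measurable_component_singleton) simp
  ultimately show ?thesis by (rule measurable_compose)
qed

lemma measurable_pooled:
  "Cal ` {..<n} \<subseteq> J \<Longrightarrow> Inl i \<in> J \<Longrightarrow> (\<lambda>x. pooled n i x k) \<in> borel_measurable (PiM J \<nu>)"
  unfolding pooled_def pooled_src_def by (auto intro: measurable_coordinate)

lemma measurable_test_score:
  "Inl ` inl \<subseteq> J \<Longrightarrow> Outl \<in> J \<Longrightarrow> (\<lambda>x. test_score inl x j) \<in> borel_measurable (PiM J \<nu>)"
  unfolding test_score_def by (cases "j \<in> inl") (auto intro: measurable_coordinate)

lemma measurable_tiebreak: "Unif j \<in> J \<Longrightarrow> (\<lambda>x. tiebreak x j) \<in> borel_measurable (PiM J \<nu>)"
  unfolding tiebreak_def by (rule measurable_compose[OF measurable_coordinate borel_measurable_clamp01])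

lemma sets_pvals_event:
  "{x\<in>space (PiM (sources n inl) \<nu>). pvals n inl x \<in> B} \<in> sets (PiM (sources n inl) \<nu>)"
proof (rule sets_Collect_finite_valued[OF _ pvals_grid])
  show "(\<lambda>x. pvals n inl x j) \<in> borel_measurable (PiM (sources n inl) \<nu>)" for j
    unfolding pvals_def
    by (intro borel_measurable_divide borel_measurable_rand_rank measurable_coordinate
        measurable_test_score measurable_tiebreak) (auto simp: sources_def)
qed simp

end

locale exchangeable_product = source_product +
  fixes i :: 'a
  assumes inlier: "i \<in> inl"
    and exchangeable: "\<And>k. k < n \<Longrightarrow> \<nu> (Cal k) = \<nu> (Inl i)"
    and uniform_tiebreak: "\<nu> (Unif i) = distr (uniform_measure lborel {0..1}) borel_vec (\<lambda>t _. t)"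
begin

abbreviation others :: "'a src set" where
  "others \<equiv> sources n inl - {Unif i}"

abbreviation pvals_event :: "('a \<Rightarrow> real) set \<Rightarrow> real \<Rightarrow> ('a src \<Rightarrow> 'a \<Rightarrow> real) set" where
  "pvals_event A y \<equiv> {z\<in>space (PiM (sources n inl) \<nu>). pvals n inl z \<in> A \<and> pvals n inl z i = y}"

abbreviation given_rank_event :: "('a \<Rightarrow> real) set \<Rightarrow> int \<Rightarrow> ('a src \<Rightarrow> 'a \<Rightarrow> real) set" where
  "given_rank_event A r \<equiv> {z\<in>space (PiM others \<nu>). pvals_given_rank n inl i r z \<in> A}"

lemma insert_Unif_others: "insert (Unif i) others = sources n inl"
  by (auto simp: sources_def)

lemma finite_sources: "finite (sources n inl)"
  by (simp add: sources_def)

lemma pooled_src_in_others: "pooled_src n i k \<in> others"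
  using inlier by (simp add: pooled_src_def sources_def)

lemma measurable_pvals_given_rank:
  "(\<lambda>x. pvals_given_rank n inl i r x j) \<in> borel_measurable (PiM others \<nu>)"
proof (cases "j = i")
  case False
  have "(\<lambda>x. real_of_int (rank_drop n (pooled n i x) r (test_score inl x j) (tiebreak x j)))
      \<in> borel_measurable (PiM others \<nu>)"
    using False inlier
    by (intro borel_measurable_rank_drop measurable_pooled measurable_test_score measurable_tiebreak)
      (auto simp: sources_def)
  then show ?thesis using False unfolding pvals_given_rank_def by simp
qed (simp add: pvals_given_rank_def)

lemma sets_pvals_given_rank_event:
  assumes "1 \<le> r" "r \<le> int n + 1"
  shows "given_rank_event A r \<in> sets (PiM others \<nu>)"
  by (rule sets_Collect_finite_valued[OF _ pvals_given_rank_grid[OF assms] measurable_pvals_given_rank])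
    simp

lemma measurable_rank_prob_pooled:
  "(\<lambda>x. rank_prob n (pooled n i x) r k) \<in> borel_measurable (PiM others \<nu>)"
  using inlier by (intro borel_measurable_rank_prob measurable_pooled) (auto simp: sources_def)

lemma sets_tiebreak_rank_event:
  "{y. rand_rank n c t (clamp 0 1 (y undefined)) = r} \<in> sets (\<nu> m)"
proof -
  have "(\<lambda>y::'a \<Rightarrow> real. y undefined) \<in> borel_measurable borel_vec"
    unfolding borel_vec_def by (rule measurable_component_singleton) simp
  then have "(\<lambda>y::'a \<Rightarrow> real. real_of_int (rand_rank n c t (clamp 0 1 (y undefined))))
      \<in> borel_measurable borel_vec"
    by (intro borel_measurable_rand_rank) auto
  from measurable_sets[OF this, of "{real_of_int r}"] show ?thesis
    by (simp add: sets_\<nu> borel_vec_def space_PiM vimage_def)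
qed

lemma emeasure_tiebreak_rank:
  "emeasure (\<nu> (Unif i)) {y. rand_rank n w (w n) (clamp 0 1 (y undefined)) = r}
     = ennreal (rank_prob n w r n)"
proof -
  have "(\<lambda>t (_::'a). t) \<in> measurable (uniform_measure lborel {0..1::real}) borel_vec"
    unfolding borel_vec_def by (intro measurable_PiM_single') (auto simp: space_PiM)
  moreover have "{y::'a \<Rightarrow> real. rand_rank n w (w n) (clamp 0 1 (y undefined)) = r} \<in> sets borel_vec"
    using sets_tiebreak_rank_event[of w "w n" r "Unif i"] by (simp add: sets_\<nu>)
  ultimately show ?thesis
    unfolding uniform_tiebreak by (simp add: emeasure_distr emeasure_rand_rank_uniform)
qed

lemma pvals_fun_upd_tiebreak:
  "pvals n inl (x(Unif i := y)) j =
     (if j = i then real_of_int (rand_rank n (pooled n i x) (pooled n i x n) (clamp 0 1 (y undefined))) / (real n + 1)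
      else pvals n inl x j)"
proof -
  have "pooled n i (x(Unif i := y)) = pooled n i x"
    by (simp add: fun_eq_iff pooled_def pooled_src_def)
  moreover have "test_score inl (x(Unif i := y)) j = test_score inl x j" "test_score inl x i = pooled n i x n"
    using inlier by (simp_all add: test_score_def pooled_def pooled_src_def)
  ultimately show ?thesis
    by (simp add: pvals_eq_pooled[where i = i] tiebreak_def)
qed

lemma pvals_fun_upd_eq_given_rank:
  assumes "rank_in_ties n (pooled n i x) r (pooled n i x n)"
    and "rand_rank n (pooled n i x) (pooled n i x n) (clamp 0 1 (y undefined)) = r"
  shows "pvals n inl (x(Unif i := y)) = pvals_given_rank n inl i r x"
proof
  fix j
  show "pvals n inl (x(Unif i := y)) j = pvals_given_rank n inl i r x j"
  proof (cases "j = i")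
    case False
    then have "pvals n inl (x(Unif i := y)) j = pvals n inl x j"
      by (simp add: pvals_fun_upd_tiebreak)
    then show ?thesis
      using False unfolding pvals_given_rank_def pvals_eq_pooled[where i = i]
      by (simp add: rand_rank_eq_rank_drop[OF assms(1)])
  qed (simp add: pvals_fun_upd_tiebreak pvals_given_rank_def assms(2))
qed

lemma nn_integral_tiebreak:
  assumes x: "x \<in> space (PiM others \<nu>)"
  shows "(\<integral>\<^sup>+ y. indicator (pvals_event A (real_of_int r / (real n + 1))) (x(Unif i := y)) \<partial>\<nu> (Unif i))
       = indicator (given_rank_event A r) x
         * ennreal (rank_prob n (pooled n i x) r n)"
proof -
  define E where "E = pvals_event A (real_of_int r / (real n + 1))"
  define G where "G = given_rank_event A r"
  define w where "w = pooled n i x"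
  define S where "S = {y::'a \<Rightarrow> real. rand_rank n w (w n) (clamp 0 1 (y undefined)) = r}"
  have space_upd: "x(Unif i := y) \<in> space (PiM (sources n inl) \<nu>)" for y
    using PiE_fun_upd[of y "\<lambda>_. UNIV" "Unif i" x others] x unfolding space_PiM_\<nu> insert_Unif_others by simp
  have pval_i: "pvals n inl (x(Unif i := y)) i = real_of_int r / (real n + 1) \<longleftrightarrow> y \<in> S" for y
    unfolding pvals_fun_upd_tiebreak S_def w_def by (simp add: divide_cancel_right)
  have "AE y in \<nu> (Unif i). indicator E (x(Unif i := y)) = indicator G x * (indicator S y :: ennreal)"
  proof (cases "rank_in_ties n w r (w n)")
    case True
    have "pvals n inl (x(Unif i := y)) = pvals_given_rank n inl i r x" if "y \<in> S" for y
      using pvals_fun_upd_eq_given_rank[OF True[unfolded w_def]] that unfolding S_def w_def by simp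
    then show ?thesis
      using x space_upd pval_i
      by (intro AE_I2) (auto simp: indicator_def pvals_given_rank_def E_def G_def)
  next
    case False
    then have "emeasure (\<nu> (Unif i)) S = 0"
      unfolding S_def w_def emeasure_tiebreak_rank by (simp add: rank_prob_def)
    then have "AE y in \<nu> (Unif i). y \<notin> S"
      by (intro AE_not_in) (simp add: null_sets_def S_def sets_tiebreak_rank_event)
    then show ?thesis
      by eventually_elim (use pval_i in \<open>auto simp: indicator_def E_def\<close>)
  qed
  then have "(\<integral>\<^sup>+ y. indicator E (x(Unif i := y)) \<partial>\<nu> (Unif i))
      = (\<integral>\<^sup>+ y. indicator G x * indicator S y \<partial>\<nu> (Unif i))"
    by (rule nn_integral_cong_AE)
  also have "\<dots> = indicator G x * emeasure (\<nu> (Unif i)) S"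
    unfolding S_def by (rule nn_integral_cmult_indicator[OF sets_tiebreak_rank_event])
  also have "emeasure (\<nu> (Unif i)) S = ennreal (rank_prob n (pooled n i x) r n)"
    unfolding S_def w_def by (rule emeasure_tiebreak_rank)
  finally show ?thesis unfolding E_def G_def .
qed

lemma emeasure_pvals_event_eq_nn_integral:
  "emeasure (PiM (sources n inl) \<nu>)
     (pvals_event A (real_of_int r / (real n + 1)))
   = (\<integral>\<^sup>+ x. indicator (given_rank_event A r) x
         * ennreal (rank_prob n (pooled n i x) r n) \<partial>PiM others \<nu>)"
proof -
  define E where "E = pvals_event A (real_of_int r / (real n + 1))"
  have E: "E \<in> sets (PiM (sources n inl) \<nu>)"
    using sets_pvals_event[of "A \<inter> {p. p i = real_of_int r / (real n + 1)}"] unfolding E_def by simp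
  have "emeasure (PiM (sources n inl) \<nu>) E = (\<integral>\<^sup>+ z. indicator E z \<partial>PiM (sources n inl) \<nu>)"
    using E by simp
  also have "\<dots> = (\<integral>\<^sup>+ x. (\<integral>\<^sup>+ y. indicator E (x(Unif i := y)) \<partial>\<nu> (Unif i)) \<partial>PiM others \<nu>)"
  proof -
    define S' where "S' = others"
    have S': "sources n inl = insert (Unif i) S'" "finite S'" "Unif i \<notin> S'"
      unfolding S'_def using finite_sources by (auto simp: sources_def)
    show ?thesis
      using E unfolding S'_def[symmetric] unfolding S'(1)
      by (intro product_nn_integral_insert[OF S'(2,3)]) simp
  qed
  also have "\<dots> = (\<integral>\<^sup>+ x. indicator (given_rank_event A r) x
         * ennreal (rank_prob n (pooled n i x) r n) \<partial>PiM others \<nu>)"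
    unfolding E_def by (intro nn_integral_cong nn_integral_tiebreak)
  finally show ?thesis unfolding E_def .
qed

abbreviation swap_pooled :: "nat \<Rightarrow> 'a src \<Rightarrow> 'a src" where
  "swap_pooled k \<equiv> Transposition.transpose (pooled_src n i k) (Inl i)"

abbreviation swap_coordinates :: "nat \<Rightarrow> ('a src \<Rightarrow> 'a \<Rightarrow> real) \<Rightarrow> 'a src \<Rightarrow> 'a \<Rightarrow> real" where
  "swap_coordinates k x \<equiv> \<lambda>m\<in>others. x (swap_pooled k m)"

lemma swap_pooled_in_others: "m \<in> others \<Longrightarrow> swap_pooled k m \<in> others"
  using pooled_src_in_others[of k] pooled_src_in_others[of n] by (auto simp: Transposition.transpose_def pooled_src_def)

lemma \<nu>_swap_pooled: "\<nu> (swap_pooled k m) = \<nu> m"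
  using exchangeable by (auto simp: Transposition.transpose_def pooled_src_def)

lemma distr_swap_coordinates:
  "distr (PiM others \<nu>) (PiM others \<nu>) (swap_coordinates k) = PiM others \<nu>"
proof -
  have "inj_on (swap_pooled k) others"
    by (rule inj_on_subset[of _ UNIV]) (simp_all add: bij_is_inj)
  moreover have "swap_pooled k \<in> others \<rightarrow> others"
    using swap_pooled_in_others by blast
  ultimately have "distr (PiM others \<nu>) (PiM others (\<lambda>m. \<nu> (swap_pooled k m))) (swap_coordinates k)
      = PiM others (\<lambda>m. \<nu> (swap_pooled k m))"
    using finite_sources by (intro distr_reorder) auto
  then show ?thesis by (simp add: \<nu>_swap_pooled)
qed

lemma measurable_swap_coordinates:
  "swap_coordinates k \<in> measurable (PiM others \<nu>) (PiM others \<nu>)"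
proof (rule measurable_restrict)
  fix m assume "m \<in> others"
  then have "(\<lambda>x. x (swap_pooled k m)) \<in> measurable (PiM others \<nu>) (\<nu> (swap_pooled k m))"
    by (intro measurable_component_singleton swap_pooled_in_others)
  then show "(\<lambda>x. x (swap_pooled k m)) \<in> measurable (PiM others \<nu>) (\<nu> m)"
    by (simp only: \<nu>_swap_pooled)
qed

lemma pooled_swap_coordinates:
  assumes "k \<le> n" "k' \<le> n"
  shows "pooled n i (swap_coordinates k x) k' = pooled n i x (Transposition.transpose k n k')"
proof -
  have "swap_pooled k (pooled_src n i k') = pooled_src n i (Transposition.transpose k n k')"
    using assms by (auto simp: Transposition.transpose_def pooled_src_def)
  then show ?thesis
    using pooled_src_in_others[of k'] by (simp add: pooled_def)
qed

lemma pvals_given_rank_swap_coordinates: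
  assumes "k \<le> n"
  shows "pvals_given_rank n inl i r (swap_coordinates k x) = pvals_given_rank n inl i r x"
proof
  fix j
  show "pvals_given_rank n inl i r (swap_coordinates k x) j = pvals_given_rank n inl i r x j"
  proof (cases "j = i")
    case False
    then have "test_score inl (swap_coordinates k x) j = test_score inl x j"
      "tiebreak (swap_coordinates k x) j = tiebreak x j"
      by (auto simp: test_score_def tiebreak_def Transposition.transpose_def pooled_src_def sources_def)
    moreover have "rank_drop n (pooled n i (swap_coordinates k x)) r t u = rank_drop n (pooled n i x) r t u"
      for t u
      using assms
      by (intro rank_drop_permute[OF permutes_swap_id[of k "{..n}" n]] pooled_swap_coordinates) auto
    ultimately show ?thesis using False by (simp add: pvals_given_rank_def)
  qed (simp add: pvals_given_rank_def)
qed

lemma rank_prob_swap_coordinates: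
  assumes "k \<le> n"
  shows "rank_prob n (pooled n i (swap_coordinates k x)) r n = rank_prob n (pooled n i x) r k"
proof -
  have "rank_prob n (pooled n i (swap_coordinates k x)) r n
      = rank_prob n (pooled n i x) r (Transposition.transpose k n n)"
    using assms
    by (intro rank_prob_permute[OF permutes_swap_id[of k "{..n}" n]]) (auto simp: pooled_swap_coordinates)
  then show ?thesis by simp
qed

lemma nn_integral_rank_prob_swap:
  assumes "k \<le> n" "1 \<le> r" "r \<le> int n + 1"
  shows "(\<integral>\<^sup>+ x. indicator (given_rank_event A r) x
             * ennreal (rank_prob n (pooled n i x) r n) \<partial>PiM others \<nu>)
       = (\<integral>\<^sup>+ x. indicator (given_rank_event A r) x
             * ennreal (rank_prob n (pooled n i x) r k) \<partial>PiM others \<nu>)"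
proof -
  define G where "G = given_rank_event A r"
  define f where "f k x = indicator G x * ennreal (rank_prob n (pooled n i x) r k)" for k x
  have [measurable]: "G \<in> sets (PiM others \<nu>)"
    unfolding G_def by (rule sets_pvals_given_rank_event[OF assms(2,3)])
  have [measurable]: "(\<lambda>x. rank_prob n (pooled n i x) r n) \<in> borel_measurable (PiM others \<nu>)"
    by (rule measurable_rank_prob_pooled)
  have "f n \<in> borel_measurable (PiM others \<nu>)" unfolding f_def by measurable
  then have "integral\<^sup>N (PiM others \<nu>) (f n) = (\<integral>\<^sup>+ x. f n (swap_coordinates k x) \<partial>PiM others \<nu>)"
    by (subst (1) distr_swap_coordinates[symmetric, of k])
      (rule nn_integral_distr[OF measurable_swap_coordinates], simp)
  also have "\<dots> = integral\<^sup>N (PiM others \<nu>) (f k)"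
  proof (rule nn_integral_cong)
    fix x assume "x \<in> space (PiM others \<nu>)"
    then have "swap_coordinates k x \<in> space (PiM others \<nu>)"
      using measurable_space[OF measurable_swap_coordinates] by blast
    with \<open>x \<in> space _\<close> show "f n (swap_coordinates k x) = f k x"
      using assms(1) unfolding f_def G_def
      by (simp add: pvals_given_rank_swap_coordinates rank_prob_swap_coordinates indicator_def)
  qed
  finally show ?thesis unfolding f_def G_def .
qed

lemma emeasure_pvals_event:
  assumes "1 \<le> r" "r \<le> int n + 1"
  shows "emeasure (PiM (sources n inl) \<nu>)
           (pvals_event A (real_of_int r / (real n + 1)))
         * of_nat (Suc n)
       = emeasure (PiM others \<nu>) (given_rank_event A r)"
proof -
  define G where "G = given_rank_event A r"
  define I where "I k = (\<integral>\<^sup>+ x. indicator G x * ennreal (rank_prob n (pooled n i x) r k) \<partial>PiM others \<nu>)" for k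
  have [measurable]: "G \<in> sets (PiM others \<nu>)"
    unfolding G_def by (rule sets_pvals_given_rank_event[OF assms])
  have [measurable]: "(\<lambda>x. rank_prob n (pooled n i x) r k) \<in> borel_measurable (PiM others \<nu>)" for k
    by (rule measurable_rank_prob_pooled)
  have "I n = I k" if "k \<le> n" for k
    unfolding I_def G_def by (rule nn_integral_rank_prob_swap[OF that assms])
  then have "(\<Sum>k\<le>n. I k) = (\<Sum>k\<le>n. I n)"
    by (intro sum.cong) auto
  then have "I n * of_nat (Suc n) = (\<Sum>k\<le>n. I k)"
    by (simp add: mult.commute)
  also have "\<dots> = (\<integral>\<^sup>+ x. (\<Sum>k\<le>n. indicator G x * ennreal (rank_prob n (pooled n i x) r k)) \<partial>PiM others \<nu>)"
    unfolding I_def by (rule nn_integral_sum[symmetric]) measurable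
  also have "\<dots> = (\<integral>\<^sup>+ x. indicator G x \<partial>PiM others \<nu>)"
    \<comment> \<open>the rank r is taken by exactly one tie block, so the weights sum to one\<close>
    by (simp add: sum_distrib_left[symmetric] sum_ennreal rank_prob_nonneg rank_prob_sum[OF assms])
  also have "\<dots> = emeasure (PiM others \<nu>) G" by simp
  finally show ?thesis
    unfolding emeasure_pvals_event_eq_nn_integral I_def G_def .
qed

lemma emeasure_pvals_event_out_of_range:
  assumes "\<not> (1 \<le> r \<and> r \<le> int n + 1)"
  shows "emeasure (PiM (sources n inl) \<nu>)
           (pvals_event A (real_of_int r / (real n + 1)))
       = 0"
  unfolding emeasure_pvals_event_eq_nn_integral by (simp add: rank_prob_eq_0[OF assms])

lemma measure_pvals_event:
  assumes "1 \<le> r" "r \<le> int n + 1"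
  shows "measure (PiM (sources n inl) \<nu>)
           (pvals_event A (real_of_int r / (real n + 1)))
       = measure (PiM others \<nu>) (given_rank_event A r) / (real n + 1)"
proof -
  interpret P: prob_space "PiM (sources n inl) \<nu>" by (rule prob_space_PiM) (rule M.prob_space_axioms)
  interpret P': prob_space "PiM others \<nu>" by (rule prob_space_PiM) (rule M.prob_space_axioms)
  define E where "E = pvals_event A (real_of_int r / (real n + 1))"
  define G where "G = given_rank_event A r"
  have "ennreal (P.prob E * (real n + 1)) = ennreal (P'.prob G)"
    using emeasure_pvals_event[OF assms, of A] unfolding E_def[symmetric] G_def[symmetric]
    by (simp add: P.emeasure_eq_measure P'.emeasure_eq_measure ennreal_of_nat_eq_real_of_nat
        ennreal_mult add.commute)
  then have "P.prob E * (real n + 1) = P'.prob G"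
    by simp
  then show ?thesis unfolding E_def G_def by (simp add: field_simps)
qed

lemma pvals_event_support:
  assumes "0 < measure (PiM (sources n inl) \<nu>) (pvals_event UNIV y)"
  obtains r where "y = real_of_int r / (real n + 1)" "1 \<le> r" "r \<le> int n + 1"
proof -
  obtain r where r: "y = real_of_int r / (real n + 1)"
  proof (cases "\<exists>z\<in>space (PiM (sources n inl) \<nu>). pvals n inl z i = y")
    case True
    then show ?thesis using that unfolding pvals_def by auto
  next
    case False
    then have "pvals_event UNIV y = {}" by auto
    then show ?thesis using assms by (simp only: measure_empty)
  qed
  moreover have "1 \<le> r \<and> r \<le> int n + 1"
  proof (rule ccontr)
    assume "\<not> ?thesis"
    from emeasure_pvals_event_out_of_range[OF this, of UNIV] assms show False
      unfolding r by (simp add: measure_def)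
  qed
  ultimately show ?thesis using that by blast
qed

lemma pvals_cond_prob_mono:
  defines "P \<equiv> PiM (sources n inl) \<nu>"
  assumes "increasing_set A" "y \<le> y'"
    and "0 < measure P (pvals_event UNIV y)" "0 < measure P (pvals_event UNIV y')"
  shows "measure P (pvals_event A y) / measure P (pvals_event UNIV y)
       \<le> measure P (pvals_event A y') / measure P (pvals_event UNIV y')"
proof -
  interpret P': prob_space "PiM others \<nu>" by (rule prob_space_PiM) (rule M.prob_space_axioms)
  define G where "G r = given_rank_event A r" for r
  \<comment> \<open>conditionally on the rank r of the inlier, the p-value vector is distributed as pvals_given_rank r\<close>
  have cond: "measure P (pvals_event A (real_of_int r / (real n + 1)))
      / measure P (pvals_event UNIV (real_of_int r / (real n + 1))) = measure (PiM others \<nu>) (G r)"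
    if "1 \<le> r" "r \<le> int n + 1" for r
    using measure_pvals_event[OF that, of A] measure_pvals_event[OF that, of UNIV]
    unfolding P_def G_def by (simp add: P'.prob_space)
  obtain r where r: "y = real_of_int r / (real n + 1)" "1 \<le> r" "r \<le> int n + 1"
    using pvals_event_support assms(4) unfolding P_def by blast
  obtain r' where r': "y' = real_of_int r' / (real n + 1)" "1 \<le> r'" "r' \<le> int n + 1"
    using pvals_event_support assms(5) unfolding P_def by blast
  have "r \<le> r'"
    using assms(3) unfolding r r' by (simp add: divide_le_cancel)
  then have "G r \<subseteq> G r'"
    unfolding G_def using pvals_given_rank_mono[OF _ assms(2)] by blast
  then have "measure (PiM others \<nu>) (G r) \<le> measure (PiM others \<nu>) (G r')"
    using sets_pvals_given_rank_event[OF r'(2,3)] unfolding G_def by (intro P'.finite_measure_mono)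
  then show ?thesis
    unfolding r(1) r'(1) cond[OF r(2,3)] cond[OF r'(2,3)] .
qed

end

section \<open>The conformal sample\<close>

lemma measurable_borel_vecI:
  "(\<And>j. (\<lambda>\<omega>. f \<omega> j) \<in> borel_measurable N) \<Longrightarrow> f \<in> measurable N borel_vec"
  unfolding borel_vec_def by (rule measurable_PiM_single') (auto simp: space_PiM)

lemma measurable_const_borel_vec: "g \<in> borel_measurable N \<Longrightarrow> (\<lambda>x _. g x) \<in> measurable N borel_vec"
  by (rule measurable_borel_vecI)

lemma sigma_sets_vimage_subset:
  assumes "f \<in> measurable N K"
  shows "sigma_sets (space N) {f -` A \<inter> space N | A. A \<in> sets K} \<subseteq> sets N"
  using assms unfolding measurable_iff_sets sets_vimage_algebra by simp

lemma sigma_sets_vimage_comp_subset: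
  assumes "g \<in> measurable N K" "f \<in> X \<rightarrow> space N"
  shows "sigma_sets X {(\<lambda>x. g (f x)) -` A \<inter> X | A. A \<in> sets K} \<subseteq> sets (vimage_algebra X f N)"
proof -
  have "(\<lambda>x. g (f x)) \<in> measurable (vimage_algebra X f N) K"
    using measurable_vimage_algebra1[OF assms(2)] assms(1) by (rule measurable_compose)
  from sigma_sets_vimage_subset[OF this] show ?thesis by simp
qed

locale conformal_sample = prob_space M
  for M :: "'w measure" +
  fixes PX :: "'d::topological_space measure" and s :: "'d \<Rightarrow> real" and n :: nat
    and Xcal :: "nat \<Rightarrow> 'w \<Rightarrow> 'd" and Xtest :: "'m::finite \<Rightarrow> 'w \<Rightarrow> 'd"
    and U :: "'m \<Rightarrow> 'w \<Rightarrow> real" and inl :: "'m set"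
  assumes s_measurable: "s \<in> borel_measurable borel"
    and Xcal_measurable: "\<forall>i<n. Xcal i \<in> borel_measurable M"
    and Xtest_measurable: "\<forall>j. Xtest j \<in> borel_measurable M"
    and U_measurable: "\<forall>j. U j \<in> borel_measurable M"
    and distr_Xcal: "\<forall>i<n. distr M borel (Xcal i) = PX"
    and distr_Xtest: "\<forall>j\<in>inl. distr M borel (Xtest j) = PX"
    and distr_U: "\<forall>j. distr M borel (U j) = uniform_measure lborel {0..1}"
    and U_bounds: "\<forall>j. \<forall>\<omega>\<in>space M. 0 \<le> U j \<omega> \<and> U j \<omega> \<le> 1"
    and indep_sources: "indep_sets (src_sigma M Xcal Xtest U inl) (Cal ` {..<n} \<union> Inl ` inl \<union> range Unif \<union> {Outl})"
begin

text \<open>Indices \<open>Cal c\<close> with \<open>c \<ge> n\<close> are not sources; the value \<open>0\<close> there only makes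
  \<open>source_value\<close> measurable at every index.\<close>

definition source_value :: "'m src \<Rightarrow> 'w \<Rightarrow> 'm \<Rightarrow> real" where
  "source_value k \<omega> = (case k of
      Cal c \<Rightarrow> (\<lambda>_. if c < n then s (Xcal c \<omega>) else 0)
    | Inl j \<Rightarrow> (\<lambda>_. s (Xtest j \<omega>))
    | Unif j \<Rightarrow> (\<lambda>_. U j \<omega>)
    | Outl \<Rightarrow> (\<lambda>j. if j \<in> inl then 0 else s (Xtest j \<omega>)))"

definition source_law :: "'m src \<Rightarrow> ('m \<Rightarrow> real) measure" where
  "source_law k = distr M borel_vec (source_value k)"

lemma measurable_source_value: "source_value k \<in> measurable M borel_vec"
proof -
  note [measurable] = s_measurable
  have [measurable]: "Xtest j \<in> borel_measurable M" "U j \<in> borel_measurable M" for j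
    using Xtest_measurable U_measurable by auto
  have [measurable]: "(\<lambda>\<omega>. if c < n then s (Xcal c \<omega>) else 0) \<in> borel_measurable M" for c
    using Xcal_measurable by (cases "c < n") auto
  show ?thesis
    unfolding source_value_def by (cases k) (auto intro!: measurable_borel_vecI)
qed

lemma measurable_Xtest_outlier_sigma:
  assumes "j \<notin> inl"
  shows "Xtest j \<in> borel_measurable (sigma (space M) (\<Union>j\<in>-inl. {Xtest j -` B \<inter> space M | B. B \<in> sets borel}))"
    (is "_ \<in> borel_measurable (sigma _ ?G)")
proof (rule measurableI)
  have "?G \<subseteq> Pow (space M)" by auto
  fix B :: "'d set" assume "B \<in> sets borel"
  then have "Xtest j -` B \<inter> space M \<in> ?G" using assms by auto
  then show "Xtest j -` B \<inter> space (sigma (space M) ?G) \<in> sets (sigma (space M) ?G)"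
    using \<open>?G \<subseteq> Pow (space M)\<close> by (simp add: space_measure_of sets_measure_of)
qed auto

lemma sigma_source_value_subset:
  assumes "k \<in> sources n inl"
  shows "sigma_sets (space M) {source_value k -` A \<inter> space M | A. A \<in> sets borel_vec}
           \<subseteq> src_sigma M Xcal Xtest U inl k"
proof (cases k)
  case (Cal c)
  then have "source_value k = (\<lambda>\<omega>. (\<lambda>x _. s x) (Xcal c \<omega>))"
    using assms by (auto simp: source_value_def sources_def)
  then show ?thesis
    using sigma_sets_vimage_comp_subset[OF measurable_const_borel_vec[OF s_measurable], of "Xcal c" "space M"]
    by (simp add: Cal src_sigma_def)
next
  case (Inl j)
  then have "source_value k = (\<lambda>\<omega>. (\<lambda>x _. s x) (Xtest j \<omega>))"
    by (simp add: source_value_def fun_eq_iff)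
  then show ?thesis
    using sigma_sets_vimage_comp_subset[OF measurable_const_borel_vec[OF s_measurable], of "Xtest j" "space M"]
    by (simp add: Inl src_sigma_def)
next
  case (Unif j)
  then have "source_value k = (\<lambda>\<omega>. (\<lambda>t _. t) (U j \<omega>))"
    by (simp add: source_value_def fun_eq_iff)
  then show ?thesis
    using sigma_sets_vimage_comp_subset[OF measurable_const_borel_vec[OF measurable_ident], of "U j" "space M"]
    by (simp add: Unif src_sigma_def)
next
  case Outl
  define G where "G = (\<Union>j\<in>-inl. {Xtest j -` B \<inter> space M | B. B \<in> sets borel})"
  have "G \<subseteq> Pow (space M)" unfolding G_def by auto
  have "source_value k \<in> measurable (sigma (space M) G) borel_vec"
    using s_measurable measurable_Xtest_outlier_sigma unfolding Outl source_value_def G_def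
    by (intro measurable_borel_vecI) (case_tac "j \<in> inl"; auto intro: measurable_compose)
  from sigma_sets_vimage_subset[OF this] \<open>G \<subseteq> Pow (space M)\<close> show ?thesis
    unfolding Outl src_sigma_def G_def[symmetric] by (simp add: space_measure_of sets_measure_of)
qed

lemma indep_vars_source_value: "indep_vars (\<lambda>_. borel_vec) source_value (sources n inl)"
  unfolding indep_vars_def
proof
  show "\<forall>k\<in>sources n inl. random_variable borel_vec (source_value k)"
    using measurable_source_value by simp
  show "indep_sets (\<lambda>k. sigma_sets (space M) {source_value k -` A \<inter> space M | A. A \<in> sets borel_vec})
      (sources n inl)"
    using indep_sources unfolding sources_def[symmetric]
    by (rule indep_sets_mono_sets) (rule sigma_source_value_subset)
qed

lemma distr_source_values:
  "distr M (PiM (sources n inl) (\<lambda>_. borel_vec)) (\<lambda>\<omega>. \<lambda>k\<in>sources n inl. source_value k \<omega>)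
     = PiM (sources n inl) source_law"
  using indep_vars_iff_distr_eq_PiM[where I = "sources n inl" and X = source_value and M' = "\<lambda>_. borel_vec"]
    indep_vars_source_value measurable_source_value
  unfolding source_law_def by (simp add: sources_def)

lemma source_product: "source_product source_law"
proof (intro source_product.intro source_product_axioms.intro product_prob_space.intro
    product_prob_space_axioms.intro)
  show prob: "prob_space (source_law k)" for k
    unfolding source_law_def by (rule prob_space_distr[OF measurable_source_value])
  show "product_sigma_finite source_law"
    unfolding product_sigma_finite_def by (intro allI prob_space_imp_sigma_finite prob)
  show "sets (source_law k) = sets borel_vec" for k
    by (simp add: source_law_def)
qed

lemma source_law_score:
  assumes "distr M borel X = PX" "X \<in> borel_measurable M"
  shows "distr M borel_vec (\<lambda>\<omega> _. s (X \<omega>)) = distr PX borel_vec (\<lambda>x _. s x)"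
proof -
  have "(\<lambda>x _. s x) \<in> measurable borel borel_vec"
    using s_measurable by (intro measurable_borel_vecI) simp
  from distr_distr[OF this assms(2)] show ?thesis
    unfolding assms(1) comp_def by (rule sym)
qed

lemma exchangeable_product:
  assumes "i \<in> inl"
  shows "exchangeable_product source_law n inl i"
proof (intro exchangeable_product.intro[OF source_product] exchangeable_product_axioms.intro)
  show "source_law (Cal k) = source_law (Inl i)" if "k < n" for k
  proof -
    have "source_law (Cal k) = distr PX borel_vec (\<lambda>x _. s x)"
      using that source_law_score[of "Xcal k"] distr_Xcal Xcal_measurable
      unfolding source_law_def source_value_def by simp
    moreover have "source_law (Inl i) = distr PX borel_vec (\<lambda>x _. s x)"
      using assms source_law_score[of "Xtest i"] distr_Xtest Xtest_measurable
      unfolding source_law_def source_value_def by simp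
    ultimately show ?thesis by simp
  qed
  show "source_law (Unif i) = distr (uniform_measure lborel {0..1}) borel_vec (\<lambda>t _. t)"
  proof -
    have "(\<lambda>t _. t) \<in> measurable borel borel_vec" by (intro measurable_borel_vecI) simp
    have "source_law (Unif i) = distr M borel_vec ((\<lambda>t _. t) \<circ> U i)"
      unfolding source_law_def source_value_def by (simp add: comp_def)
    also have "\<dots> = distr (distr M borel (U i)) borel_vec (\<lambda>t _. t)"
      using U_measurable by (intro distr_distr[symmetric] \<open>(\<lambda>t _. t) \<in> _\<close>) simp
    finally show ?thesis using distr_U by simp
  qed
qed (rule assms)

lemma pvals_source_values:
  assumes "\<omega> \<in> space M"
  shows "pvals n inl (\<lambda>k\<in>sources n inl. source_value k \<omega>) j = conf_pval s n (\<lambda>i. Xcal i \<omega>) (Xtest j \<omega>) (U j \<omega>)"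
proof -
  have "Unif j \<in> sources n inl" "Outl \<in> sources n inl" "j \<in> inl \<Longrightarrow> Inl j \<in> sources n inl"
    by (simp_all add: sources_def)
  then have "test_score inl (\<lambda>k\<in>sources n inl. source_value k \<omega>) j = s (Xtest j \<omega>)"
    "tiebreak (\<lambda>k\<in>sources n inl. source_value k \<omega>) j = U j \<omega>"
    using U_bounds assms by (auto simp: test_score_def tiebreak_def source_value_def)
  moreover have "rand_rank n (\<lambda>k. (\<lambda>k\<in>sources n inl. source_value k \<omega>) (Cal k) undefined) t u
      = rand_rank n (\<lambda>k. s (Xcal k \<omega>)) t u" for t u
    by (rule rand_rank_cong) (simp add: source_value_def sources_def)
  ultimately show ?thesis
    by (simp add: pvals_def conf_pval_eq_rand_rank)
qed

lemma measure_conf_pvals_event: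
  fixes B :: "('m \<Rightarrow> real) set"
  defines "p \<equiv> \<lambda>\<omega> j. conf_pval s n (\<lambda>i. Xcal i \<omega>) (Xtest j \<omega>) (U j \<omega>)"
  shows "measure M {\<omega>\<in>space M. p \<omega> \<in> B}
       = measure (PiM (sources n inl) source_law) {z\<in>space (PiM (sources n inl) source_law). pvals n inl z \<in> B}"
proof -
  interpret source_product source_law n inl by (rule source_product)
  let ?\<xi> = "\<lambda>\<omega>. \<lambda>k\<in>sources n inl. source_value k \<omega>"
  let ?F = "{z\<in>space (PiM (sources n inl) source_law). pvals n inl z \<in> B}"
  have \<xi>: "?\<xi> \<in> measurable M (PiM (sources n inl) (\<lambda>_. borel_vec))"
    by (rule measurable_restrict) (rule measurable_source_value)
  have sets_eq: "sets (PiM (sources n inl) (\<lambda>_. borel_vec)) = sets (PiM (sources n inl) source_law)"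
    by (rule sets_PiM_cong) (simp_all add: sets_\<nu>)
  then have "space (PiM (sources n inl) (\<lambda>_. borel_vec)) = space (PiM (sources n inl) source_law)"
    by (rule sets_eq_imp_space_eq)
  moreover have "pvals n inl (?\<xi> \<omega>) = p \<omega>" if "\<omega> \<in> space M" for \<omega>
    using pvals_source_values[OF that] unfolding p_def by (simp add: fun_eq_iff)
  ultimately have "{\<omega>\<in>space M. p \<omega> \<in> B} = ?\<xi> -` ?F \<inter> space M"
    using measurable_space[OF \<xi>] by auto
  then have "measure M {\<omega>\<in>space M. p \<omega> \<in> B} = measure (distr M (PiM (sources n inl) (\<lambda>_. borel_vec)) ?\<xi>) ?F"
    using sets_pvals_event[of B] sets_eq by (simp add: measure_distr[OF \<xi>])
  then show ?thesis
    unfolding distr_source_values .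
qed

theorem PRDS_conf_pvals:
  "PRDS_on M (\<lambda>j \<omega>. conf_pval s n (\<lambda>i. Xcal i \<omega>) (Xtest j \<omega>) (U j \<omega>)) inl"
proof -
  define p where "p \<omega> j = conf_pval s n (\<lambda>i. Xcal i \<omega>) (Xtest j \<omega>) (U j \<omega>)" for \<omega> j
  let ?P = "PiM (sources n inl) source_law"
  have event: "measure M {\<omega>\<in>space M. p \<omega> \<in> B} = measure ?P {z\<in>space ?P. pvals n inl z \<in> B}" for B
    unfolding p_def by (rule measure_conf_pvals_event)
  have "PRDS_on M (\<lambda>j \<omega>. p \<omega> j) inl"
    unfolding PRDS_on_def cond_prob_eq_def
  proof (intro ballI allI impI)
    fix i :: 'm and A :: "('m \<Rightarrow> real) set" and y y' :: real
    assume "i \<in> inl" "increasing_set A"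
      and y: "y \<le> y' \<and> 0 < measure M {\<omega>\<in>space M. p \<omega> i = y} \<and> 0 < measure M {\<omega>\<in>space M. p \<omega> i = y'}"
    interpret exchangeable_product source_law n inl i by (rule exchangeable_product[OF \<open>i \<in> inl\<close>])
    have "measure M {\<omega>\<in>space M. p \<omega> \<in> A \<and> p \<omega> i = z}
        = measure ?P {x\<in>space ?P. pvals n inl x \<in> A \<and> pvals n inl x i = z}"
      "measure M {\<omega>\<in>space M. p \<omega> i = z} = measure ?P {x\<in>space ?P. pvals n inl x i = z}" for z
      using event[of "A \<inter> {q. q i = z}"] event[of "{q. q i = z}"] by simp_all
    then show "measure M {\<omega>\<in>space M. (\<lambda>j. p \<omega> j) \<in> A \<and> p \<omega> i = y} / measure M {\<omega>\<in>space M. p \<omega> i = y}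
        \<le> measure M {\<omega>\<in>space M. (\<lambda>j. p \<omega> j) \<in> A \<and> p \<omega> i = y'} / measure M {\<omega>\<in>space M. p \<omega> i = y'}"
      using pvals_cond_prob_mono[OF \<open>increasing_set A\<close>, of y y'] y by simp
  qed
  then show ?thesis unfolding p_def .
qed

end

theorem proposition4:
  fixes M :: "'w measure" and PX :: "(real ^ 'd) measure" and s :: "real ^ 'd \<Rightarrow> real"
    and n :: nat and Xcal :: "nat \<Rightarrow> 'w \<Rightarrow> real ^ 'd"
    and Xtest :: "'m::finite \<Rightarrow> 'w \<Rightarrow> real ^ 'd" and U :: "'m \<Rightarrow> 'w \<Rightarrow> real"
    and inl :: "'m set"
  assumes "prob_space M" and "prob_space PX" and "s \<in> borel_measurable borel"
    and "\<forall>i<n. Xcal i \<in> borel_measurable M"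
    and "\<forall>j. Xtest j \<in> borel_measurable M"
    and "\<forall>j. U j \<in> borel_measurable M"
    and "\<forall>i<n. distr M borel (Xcal i) = PX"
    and "\<forall>j\<in>inl. distr M borel (Xtest j) = PX"
    and "\<forall>j. distr M borel (U j) = uniform_measure lborel {0..1}"
    and "\<forall>j. \<forall>\<omega>\<in>space M. 0 \<le> U j \<omega> \<and> U j \<omega> \<le> 1"
    and "prob_space.indep_sets M (src_sigma M Xcal Xtest U inl)
           (Cal ` {..<n} \<union> Inl ` inl \<union> range Unif \<union> {Outl})"
  shows "PRDS_on M (\<lambda>j \<omega>. conf_pval s n (\<lambda>i. Xcal i \<omega>) (Xtest j \<omega>) (U j \<omega>)) inl"
proof -
  interpret conformal_sample M PX s n Xcal Xtest U inl
    using assms by (simp add: conformal_sample_def conformal_sample_axioms_def)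
  show ?thesis by (rule PRDS_conf_pvals)
qed

end
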